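(* Let $p,q\ge 0$ be integers and let $\lambda=(p+1,1^{q})$. Let $z_{-q},\dots,z_p\in\mathbb{C}$ with $\Re(z_k)\ge 1$ for all $-q\le k\le p$, $\Re(z_p)>1$ and $\Re(z_{-q})>1$, and let ${\pmb s}\in T(\lambda,\mathbb{C})$ have first row $z_0,z_1,\dots,z_p$ and first column $z_0,z_{-1},\dots,z_{-q}$ (i.e. $s_{1,j}=z_{j-1}$, $s_{i,1}=z_{-(i-1)}$). Then $$\zeta_{\lambda}({\pmb s})=\sum_{j=0}^{p}(-1)^j\,\zeta(z_{j},\ldots,z_{1},z_0,z_{-1},\ldots,z_{-q})\,\zeta^{\star}(z_{j+1},\ldots,z_{p}),$$ where $\zeta^{\star}(z_{j+1},\ldots,z_{p})$ is interpreted as $1$ when $j=p$.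
   Context: Euler–Zagier multiple zeta-function and its star variant: $\zeta(s_1,\ldots,s_r)=\sum_{0<m_1<\cdots<m_r}m_1^{-s_1}\cdots m_r^{-s_r}$ and $\zeta^{\star}(s_1,\ldots,s_r)=\sum_{0<m_1\le\cdots\le m_r}m_1^{-s_1}\cdots m_r^{-s_r}$. For a partition $\lambda$, $T(\lambda,X)$ denotes the set of fillings of the Young diagram of $\lambda$ by elements of $X$, and $\mathrm{SSYT}(\lambda)$ is the set of semi-standard Young tableaux $M=(m_{ij})\in T(\lambda,\mathbb{N})$, i.e. weakly increasing along rows and strictly increasing down columns. For ${\pmb s}=(s_{ij})\in T(\lambda,\mathbb{C})$ the Schur multiple zeta-function is $\zeta_\lambda({\pmb s})=\sum_{M\in\mathrm{SSYT}(\lambda)}\prod_{(i,j)\in\lambda}m_{ij}^{-s_{ij}}$. The content of box $(i,j)$ is $j-i$; content-parametrized means $s_{ij}=z_{j-i}$. *)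

theory Defs
  imports "HOL-Analysis.Analysis"
begin

text \<open>A partition is given by the list of its row lengths (weakly decreasing, positive).
  Boxes are indexed (i,j) with 1-based row i and column j.\<close>

definition young_diagram :: "nat list \<Rightarrow> (nat \<times> nat) set" where
  "young_diagram lam = {(i,j). 1 \<le> i \<and> i \<le> length lam \<and> 1 \<le> j \<and> j \<le> lam ! (i - 1)}"

text \<open>Outside the
  diagram the filling is normalised to 0 so that each tableau is represented once.\<close>

definition SSYT :: "nat list \<Rightarrow> (nat \<times> nat \<Rightarrow> nat) set" where
  "SSYT lam = {M.
     (\<forall>x\<in>young_diagram lam. 1 \<le> M x) \<and>
     (\<forall>x. x \<notin> young_diagram lam \<longrightarrow> M x = 0) \<and>
     (\<forall>i j. (i,j) \<in> young_diagram lam \<and> (i, Suc j) \<in> young_diagram lam \<longrightarrow> M (i,j) \<le> M (i, Suc j)) \<and>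
     (\<forall>i j. (i,j) \<in> young_diagram lam \<and> (Suc i, j) \<in> young_diagram lam \<longrightarrow> M (i,j) < M (Suc i, j))}"

definition schur_zeta :: "nat list \<Rightarrow> (nat \<times> nat \<Rightarrow> complex) \<Rightarrow> complex" where
  "schur_zeta lam s =
     (\<Sum>\<^sub>\<infinity>M\<in>SSYT lam. \<Prod>x\<in>young_diagram lam. inverse (of_nat (M x) powr s x))"

definition mzeta :: "complex list \<Rightarrow> complex" where
  "mzeta s = (\<Sum>\<^sub>\<infinity>m\<in>{m :: nat list. length m = length s \<and> sorted_wrt (<) m \<and> 0 \<notin> set m}.
      \<Prod>i<length s. inverse (of_nat (m ! i) powr (s ! i)))"

definition mzeta_star :: "complex list \<Rightarrow> complex" where
  "mzeta_star s = (\<Sum>\<^sub>\<infinity>m\<in>{m :: nat list. length m = length s \<and> sorted_wrt (\<le>) m \<and> 0 \<notin> set m}.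
      \<Prod>i<length s. inverse (of_nat (m ! i) powr (s ! i)))"

end

theory Submission
  imports Defs
begin

text \<open>The j-th product zeta(z_j, ..., z_{-q}) zeta*(z_{j+1}, ..., z_p) is a sum over pairs (u, v)
  of a strictly increasing tuple u (for the column variables z_j, ..., z_{-q}) and a weakly
  increasing tuple v (for the row variables z_{j+1}, ..., z_p).  The pairs with v empty or
  hd u \<le> hd v glue, v to the right of the top of u, into the semi-standard tableaux of the hook
  with first column z_j, ..., z_{-q} and first row z_j, ..., z_p; call their sum H_j.  For the
  other pairs, moving hd v to the front of u is a bijection onto the pairs counted by H_{j+1}.
  Thus the j-th product is H_j + H_{j+1} (with H_{p+1} = 0), the alternating sum telescopes to
  H_0, and H_0 is the Schur multiple zeta function of the hook (p+1, 1^q).  All rearrangements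
  are justified by absolute convergence, obtained by dominating the weight of a weakly increasing
  tuple m of length r by the product of the m_i^(-c) with c = 1 + (Re z_last - 1) / r.\<close>

lemma abs_summable_on_product:
  fixes f :: "'a \<Rightarrow> 'c::real_normed_div_algebra" and g :: "'b \<Rightarrow> 'c"
  assumes "(\<lambda>x. norm (f x)) summable_on A" and "(\<lambda>y. norm (g y)) summable_on B"
  shows "(\<lambda>(x, y). norm (f x * g y)) summable_on A \<times> B"
proof -
  have "(\<lambda>z. norm (case z of (x, y) \<Rightarrow> f x * g y)) summable_on Sigma A (\<lambda>_. B)"
  proof (subst Infinite_Sum.abs_summable_on_Sigma_iff, intro conjI ballI)
    show "(\<lambda>y. norm (case (x, y) of (x, y) \<Rightarrow> f x * g y)) summable_on B" for x
      using summable_on_cmult_right[OF assms(2), of "norm (f x)"] by (simp add: norm_mult)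
    show "(\<lambda>x. norm (\<Sum>\<^sub>\<infinity>y\<in>B. norm (case (x, y) of (x, y) \<Rightarrow> f x * g y))) summable_on A"
      using summable_on_cmult_left[OF assms(1), of "norm (\<Sum>\<^sub>\<infinity>y\<in>B. norm (g y))"]
      by (simp add: norm_mult infsum_cmult_right' abs_mult)
  qed
  then show ?thesis by (simp add: case_prod_unfold)
qed

lemma infsum_product:
  fixes f :: "'a \<Rightarrow> 'c::{banach, real_normed_div_algebra}" and g :: "'b \<Rightarrow> 'c"
  assumes "(\<lambda>x. norm (f x)) summable_on A" and "(\<lambda>y. norm (g y)) summable_on B"
  shows "(\<Sum>\<^sub>\<infinity>(x, y)\<in>A \<times> B. f x * g y) = infsum f A * infsum g B"
proof -
  have "(\<lambda>z. norm ((\<lambda>(x, y). f x * g y) z)) summable_on A \<times> B"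
    using abs_summable_on_product[OF assms] by (simp add: case_prod_unfold)
  then have "(\<lambda>(x, y). f x * g y) summable_on A \<times> B"
    by (rule abs_summable_summable)
  from infsum_Sigma_banach[OF this]
  have "(\<Sum>\<^sub>\<infinity>(x, y)\<in>A \<times> B. f x * g y) = (\<Sum>\<^sub>\<infinity>x\<in>A. \<Sum>\<^sub>\<infinity>y\<in>B. f x * g y)"
    by simp
  also have "\<dots> = infsum f A * infsum g B"
    by (simp add: infsum_cmult_right' infsum_cmult_left')
  finally show ?thesis .
qed

definition chain_weight :: "complex list \<Rightarrow> nat list \<Rightarrow> complex" where
  "chain_weight s m = (\<Prod>i<length s. inverse (of_nat (m ! i) powr (s ! i)))"

definition strict_chains :: "nat \<Rightarrow> nat list set" where
  "strict_chains n = {m. length m = n \<and> sorted_wrt (<) m \<and> 0 \<notin> set m}"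

definition weak_chains :: "nat \<Rightarrow> nat list set" where
  "weak_chains n = {m. length m = n \<and> sorted_wrt (\<le>) m \<and> 0 \<notin> set m}"

lemma mzeta_eq_infsum: "mzeta s = (\<Sum>\<^sub>\<infinity>m\<in>strict_chains (length s). chain_weight s m)"
  by (simp add: mzeta_def strict_chains_def chain_weight_def)

lemma mzeta_star_eq_infsum: "mzeta_star s = (\<Sum>\<^sub>\<infinity>m\<in>weak_chains (length s). chain_weight s m)"
  by (simp add: mzeta_star_def weak_chains_def chain_weight_def)

lemma chain_weight_Cons:
  "chain_weight (a # s) (x # m) = inverse (of_nat x powr a) * chain_weight s m"
  unfolding chain_weight_def length_Cons prod.lessThan_Suc_shift by simp

lemma strict_chains_subset_weak_chains: "strict_chains n \<subseteq> weak_chains n"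
  by (auto simp: strict_chains_def weak_chains_def strict_sorted_imp_sorted)

lemma weak_chains_0 [simp]: "weak_chains 0 = {[]}"
  by (auto simp: weak_chains_def)

lemma summable_on_positive_tuples_powr:
  fixes c :: real
  assumes "c > 1"
  shows "(\<lambda>m. \<Prod>i<n. real (m ! i) powr (- c)) summable_on {m. length m = n \<and> 0 \<notin> set m}"
proof (induction n)
  case 0
  have "{m :: nat list. length m = 0 \<and> 0 \<notin> set m} = {[]}" by auto
  then show ?case by simp
next
  case (Suc n)
  let ?P = "\<lambda>n. {m :: nat list. length m = n \<and> 0 \<notin> set m}"
  have "summable (\<lambda>k. norm (norm (real k powr (- c))))"
    using summable_real_powr_iff[of "- c"] assms by simp
  then have "(\<lambda>k. norm (real k powr (- c))) summable_on {1..}"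
    by (rule summable_on_subset_banach[OF norm_summable_imp_summable_on]) simp
  moreover have "(\<lambda>m. norm (\<Prod>i<n. real (m ! i) powr (- c))) summable_on ?P n"
    using Suc.IH by (simp add: abs_prod)
  ultimately have "(\<lambda>(x, m). norm (real x powr (- c) * (\<Prod>i<n. real (m ! i) powr (- c))))
      summable_on {1..} \<times> ?P n"
    by (rule abs_summable_on_product)
  then have summable: "(\<lambda>(x, m). real x powr (- c) * (\<Prod>i<n. real (m ! i) powr (- c)))
      summable_on {1..} \<times> ?P n"
    by (simp add: case_prod_unfold abs_mult abs_prod)
  have image: "?P (Suc n) = (\<lambda>(x, m). x # m) ` ({1..} \<times> ?P n)"
  proof (intro set_eqI iffI)
    fix m assume "m \<in> ?P (Suc n)"
    then obtain x l where "m = x # l" by (cases m) auto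
    with \<open>m \<in> ?P (Suc n)\<close> show "m \<in> (\<lambda>(x, m). x # m) ` ({1..} \<times> ?P n)"
      by (auto simp: image_iff Suc_le_eq intro!: bexI[of _ "(x, l)"])
  qed auto
  have inj: "inj_on (\<lambda>(x, m). x # m) ({1..} \<times> ?P n)"
    by (auto simp: inj_on_def)
  have Cons: "(\<Prod>i<Suc n. real ((x # m) ! i) powr (- c))
      = real x powr (- c) * (\<Prod>i<n. real (m ! i) powr (- c))" for x m
    unfolding prod.lessThan_Suc_shift by simp
  show ?case
    unfolding image summable_on_reindex[OF inj] using summable
    by (simp only: o_def case_prod_unfold Cons)
qed

text \<open>As m is weakly increasing, the surplus Re (last s) - 1 of the last exponent can be
  spread evenly over all entries.\<close>

lemma norm_chain_weight_le:
  assumes m: "m \<in> weak_chains (Suc n)" and len: "length s = Suc n"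
    and re: "\<forall>a\<in>set s. 1 \<le> Re a"
  defines "c \<equiv> 1 + (Re (last s) - 1) / Suc n"
  shows "norm (chain_weight s m) \<le> (\<Prod>i<Suc n. real (m ! i) powr (- c))"
proof -
  define \<epsilon> where "\<epsilon> = (Re (last s) - 1) / Suc n"
  define k where "k i = real (m ! i)" for i
  define N where "N = k n"
  have last: "last s = s ! n" using len by (subst last_conv_nth) auto
  have re_nth: "1 \<le> Re (s ! i)" if "i < Suc n" for i
    using re that len by simp
  have \<epsilon>: "\<epsilon> \<ge> 0" using re_nth[of n] by (simp add: \<epsilon>_def last)
  have k1: "1 \<le> k i" if "i < Suc n" for i
  proof -
    have "m ! i \<in> set m" "0 \<notin> set m" using m that by (auto simp: weak_chains_def)
    then have "m ! i \<noteq> 0" by metis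
    then show ?thesis by (simp add: k_def)
  qed
  have kN: "k i \<le> N" if "i < n" for i
    using m that by (auto simp: k_def N_def weak_chains_def intro!: sorted_nth_mono)
  have "norm (chain_weight s m) = (\<Prod>i<Suc n. k i powr (- Re (s ! i)))"
    unfolding chain_weight_def len prod_norm[symmetric]
    by (intro prod.cong refl) (simp add: norm_inverse norm_powr_real_powr powr_minus k_def)
  also have "\<dots> = (\<Prod>i<n. k i powr (- Re (s ! i))) * N powr (- Re (s ! n))"
    by (simp add: N_def)
  also have "\<dots> \<le> (\<Prod>i<n. k i powr (- 1)) * (N powr (- c) * (\<Prod>i<n. N powr (- \<epsilon>)))"
  proof (rule mult_mono)
    show "(\<Prod>i<n. k i powr (- Re (s ! i))) \<le> (\<Prod>i<n. k i powr (- 1))"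
    proof (intro prod_mono conjI)
      fix i assume "i \<in> {..<n}"
      then show "k i powr (- Re (s ! i)) \<le> k i powr (- 1)"
        using k1 re_nth by (intro powr_mono) auto
    qed simp
    have "- Re (s ! n) = - c + (\<Sum>i<n. - \<epsilon>)"
      by (simp add: c_def \<epsilon>_def last field_simps del: of_nat_Suc) (simp add: algebra_simps)
    moreover have "N \<noteq> 0" using k1[of n] by (simp add: N_def)
    ultimately show "N powr (- Re (s ! n)) \<le> N powr (- c) * (\<Prod>i<n. N powr (- \<epsilon>))"
      by (simp only: powr_add powr_sum[OF \<open>N \<noteq> 0\<close>] order_refl)
  qed (auto intro!: prod_nonneg)
  also have "\<dots> \<le> (\<Prod>i<n. k i powr (- 1)) * (N powr (- c) * (\<Prod>i<n. k i powr (- \<epsilon>)))"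
    using k1 kN \<epsilon>
    by (intro mult_left_mono prod_mono)
       (auto intro!: powr_mono2' prod_nonneg less_le_trans[OF zero_less_one])
  also have "\<dots> = (\<Prod>i<n. k i powr (- 1) * k i powr (- \<epsilon>)) * N powr (- c)"
    by (simp only: prod.distrib ac_simps)
  also have "\<dots> = (\<Prod>i<Suc n. k i powr (- c))"
  proof -
    have "k i powr (- 1) * k i powr (- \<epsilon>) = k i powr (- c)" for i
      by (simp only: powr_add[symmetric] c_def \<epsilon>_def minus_add add.commute)
    then show ?thesis by (simp add: N_def)
  qed
  finally show ?thesis by (simp add: k_def)
qed

lemma chain_weight_abs_summable:
  assumes "s \<noteq> []" and "\<forall>a\<in>set s. 1 \<le> Re a" and "1 < Re (last s)"
  shows "(\<lambda>m. norm (chain_weight s m)) summable_on weak_chains (length s)"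
proof -
  obtain n where len: "length s = Suc n" using assms(1) by (cases s) auto
  define c where "c = 1 + (Re (last s) - 1) / Suc n"
  have "c > 1" using assms(3) by (simp add: c_def)
  then have "(\<lambda>m. \<Prod>i<Suc n. real (m ! i) powr (- c)) summable_on weak_chains (Suc n)"
    by (rule summable_on_subset_banach[OF summable_on_positive_tuples_powr])
       (auto simp: weak_chains_def)
  then show ?thesis
    unfolding len
    by (rule summable_on_comparison_test)
       (use norm_chain_weight_le[OF _ len assms(2)] in \<open>auto simp: c_def\<close>)
qed

definition head_le_pairs :: "nat \<Rightarrow> nat \<Rightarrow> (nat list \<times> nat list) set" where
  "head_le_pairs k n =
     {(u, v). u \<in> strict_chains k \<and> v \<in> weak_chains n \<and> (v = [] \<or> hd u \<le> hd v)}"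

definition head_gt_pairs :: "nat \<Rightarrow> nat \<Rightarrow> (nat list \<times> nat list) set" where
  "head_gt_pairs k n =
     {(u, v). u \<in> strict_chains k \<and> v \<in> weak_chains n \<and> v \<noteq> [] \<and> hd v < hd u}"

definition pair_weight :: "complex list \<Rightarrow> complex list \<Rightarrow> nat list \<times> nat list \<Rightarrow> complex" where
  "pair_weight s t = (\<lambda>(u, v). chain_weight s u * chain_weight t v)"

lemma head_gt_pairs_0 [simp]: "head_gt_pairs k 0 = {}"
  by (simp add: head_gt_pairs_def)

text \<open>The Schur multiple zeta function of the hook whose first column carries the variables s
  and whose first row, right of the corner, carries t (lemma schur_zeta_hook).\<close>

definition hook_zeta :: "complex list \<Rightarrow> complex list \<Rightarrow> complex" where
  "hook_zeta s t = infsum (pair_weight s t) (head_le_pairs (length s) (length t))"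

lemma mzeta_times_mzeta_star_split:
  assumes s: "(\<lambda>m. norm (chain_weight s m)) summable_on strict_chains (length s)"
    and t: "(\<lambda>m. norm (chain_weight t m)) summable_on weak_chains (length t)"
  shows "mzeta s * mzeta_star t =
     hook_zeta s t + infsum (pair_weight s t) (head_gt_pairs (length s) (length t))"
proof -
  let ?P = "strict_chains (length s) \<times> weak_chains (length t)"
  have "(\<lambda>uv. norm (pair_weight s t uv)) summable_on ?P"
    using abs_summable_on_product[OF s t] by (simp add: pair_weight_def case_prod_unfold)
  then have summable: "pair_weight s t summable_on ?P"
    by (rule abs_summable_summable)
  have "mzeta s * mzeta_star t = infsum (pair_weight s t) ?P"
    unfolding mzeta_eq_infsum mzeta_star_eq_infsum pair_weight_def
    by (rule infsum_product[OF s t, symmetric])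
  also have "?P = head_le_pairs (length s) (length t) \<union> head_gt_pairs (length s) (length t)"
    by (auto simp: head_le_pairs_def head_gt_pairs_def)
  also have "infsum (pair_weight s t) \<dots> =
      hook_zeta s t + infsum (pair_weight s t) (head_gt_pairs (length s) (length t))"
    unfolding hook_zeta_def
    by (rule infsum_Un_disjoint)
       (auto intro: summable_on_subset_banach[OF summable] simp: head_le_pairs_def head_gt_pairs_def)
  finally show ?thesis .
qed

lemma infsum_head_gt_pairs_Cons:
  "infsum (pair_weight s (a # t)) (head_gt_pairs (Suc k) (Suc n)) =
   infsum (pair_weight (a # s) t) (head_le_pairs (Suc (Suc k)) n)"
proof (rule infsum_reindex_bij_witness[where j = "\<lambda>(u, v). (hd v # u, tl v)"
      and i = "\<lambda>(u, v). (tl u, hd u # v)"])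
  fix uv assume "uv \<in> head_gt_pairs (Suc k) (Suc n)"
  then obtain u y v where uv: "uv = (u, y # v)" "u \<in> strict_chains (Suc k)"
      "y # v \<in> weak_chains (Suc n)" "y < hd u"
    by (auto simp: head_gt_pairs_def neq_Nil_conv)
  then obtain x u' where u: "u = x # u'" by (cases u) (auto simp: strict_chains_def)
  show "(case case uv of (u, v) \<Rightarrow> (hd v # u, tl v) of (u, v) \<Rightarrow> (tl u, hd u # v)) = uv"
    by (simp add: uv)
  show "(case uv of (u, v) \<Rightarrow> (hd v # u, tl v)) \<in> head_le_pairs (Suc (Suc k)) n"
    using uv u by (cases v) (auto simp: head_le_pairs_def strict_chains_def weak_chains_def)
  show "pair_weight (a # s) t (case uv of (u, v) \<Rightarrow> (hd v # u, tl v)) = pair_weight s (a # t) uv"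
    by (simp add: uv pair_weight_def chain_weight_Cons)
next
  fix uv assume "uv \<in> head_le_pairs (Suc (Suc k)) n"
  then obtain x x' u v where uv: "uv = (x # x' # u, v)" "x # x' # u \<in> strict_chains (Suc (Suc k))"
      "v \<in> weak_chains n" "v = [] \<or> x \<le> hd v"
    by (auto simp: head_le_pairs_def strict_chains_def length_Suc_conv)
  show "(case case uv of (u, v) \<Rightarrow> (tl u, hd u # v) of (u, v) \<Rightarrow> (hd v # u, tl v)) = uv"
    by (simp add: uv)
  show "(case uv of (u, v) \<Rightarrow> (tl u, hd u # v)) \<in> head_gt_pairs (Suc k) (Suc n)"
    using uv by (cases v) (auto simp: head_gt_pairs_def strict_chains_def weak_chains_def)
qed

lemma mzeta_times_mzeta_star_Cons:
  assumes "s \<noteq> []"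
    and "(\<lambda>m. norm (chain_weight s m)) summable_on strict_chains (length s)"
    and "(\<lambda>m. norm (chain_weight (a # t) m)) summable_on weak_chains (length (a # t))"
  shows "mzeta s * mzeta_star (a # t) = hook_zeta s (a # t) + hook_zeta (a # s) t"
proof -
  obtain k where "length s = Suc k" using assms(1) by (cases s) auto
  then show ?thesis
    using mzeta_times_mzeta_star_split[OF assms(2,3)]
    by (simp add: infsum_head_gt_pairs_Cons hook_zeta_def)
qed

lemma mzeta_times_mzeta_star_Nil:
  assumes "(\<lambda>m. norm (chain_weight s m)) summable_on strict_chains (length s)"
  shows "mzeta s * mzeta_star [] = hook_zeta s []"
  using mzeta_times_mzeta_star_split[OF assms, of "[]"] by simp

lemma hook_diagram_iff:
  "(a, b) \<in> young_diagram (Suc p # replicate q 1) \<longleftrightarrow>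
     (b = 1 \<and> 1 \<le> a \<and> a \<le> Suc q) \<or> (a = 1 \<and> 2 \<le> b \<and> b \<le> Suc p)"
proof -
  have "(Suc p # replicate q 1) ! (a - 1) = (if a \<le> 1 then Suc p else 1)" if "a \<le> Suc q"
    using that by (cases "a - 1") (auto simp: nth_Cons split: nat.splits)
  then show ?thesis unfolding young_diagram_def by (auto split: if_splits)
qed

lemma hook_diagram_eq:
  "young_diagram (Suc p # replicate q 1) =
     (\<lambda>i. (Suc i, 1)) ` {..<Suc q} \<union> (\<lambda>k. (1, k + 2)) ` {..<p}"
proof -
  have column: "(a, b) \<in> (\<lambda>i. (Suc i, 1)) ` {..<Suc q} \<longleftrightarrow> b = 1 \<and> 1 \<le> a \<and> a \<le> Suc q"
    for a b
    by (cases a) (auto simp: image_iff)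
  have arm: "(a, b) \<in> (\<lambda>k. (1, k + 2)) ` {..<p} \<longleftrightarrow> a = 1 \<and> 2 \<le> b \<and> b \<le> Suc p"
    for a b
    by (auto simp: image_iff intro!: bexI[of _ "b - 2"])
  show ?thesis
  proof (rule set_eqI)
    fix x :: "nat \<times> nat"
    show "x \<in> young_diagram (Suc p # replicate q 1) \<longleftrightarrow>
        x \<in> (\<lambda>i. (Suc i, 1)) ` {..<Suc q} \<union> (\<lambda>k. (1, k + 2)) ` {..<p}"
      by (cases x) (simp only: Un_iff hook_diagram_iff column arm)
  qed
qed

lemma prod_hook_diagram:
  "(\<Prod>x\<in>young_diagram (Suc p # replicate q 1). f x) =
     (\<Prod>i<Suc q. f (Suc i, 1)) * (\<Prod>k<p. f (1, k + 2))"
proof -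
  have "inj_on (\<lambda>i. (Suc i, 1::nat)) {..<Suc q}" "inj_on (\<lambda>k. (1::nat, k + 2)) {..<p}"
    by (auto simp: inj_on_def)
  moreover have "(\<lambda>i. (Suc i, 1::nat)) ` {..<Suc q} \<inter> (\<lambda>k. (1::nat, k + 2)) ` {..<p} = {}"
    by auto
  ultimately show ?thesis
    unfolding hook_diagram_eq by (simp add: prod.union_disjoint prod.reindex del: prod.lessThan_Suc)
qed

definition hook_column :: "nat \<Rightarrow> (nat \<times> nat \<Rightarrow> 'a) \<Rightarrow> 'a list" where
  "hook_column q M = map (\<lambda>i. M (Suc i, 1)) [0..<Suc q]"

definition hook_arm :: "nat \<Rightarrow> (nat \<times> nat \<Rightarrow> 'a) \<Rightarrow> 'a list" where
  "hook_arm p M = map (\<lambda>k. M (1, k + 2)) [0..<p]"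

lemma length_hook_column [simp]: "length (hook_column q M) = Suc q"
  by (simp add: hook_column_def del: upt_Suc)

lemma length_hook_arm [simp]: "length (hook_arm p M) = p"
  by (simp add: hook_arm_def)

definition hook_tableau :: "nat \<Rightarrow> nat \<Rightarrow> nat list \<times> nat list \<Rightarrow> nat \<times> nat \<Rightarrow> nat" where
  "hook_tableau p q = (\<lambda>(u, v) (a, b).
     if b = 1 \<and> 1 \<le> a \<and> a \<le> Suc q then u ! (a - 1)
     else if a = 1 \<and> 2 \<le> b \<and> b \<le> Suc p then v ! (b - 2) else 0)"

lemma chain_weight_map_upt:
  "chain_weight (map f [0..<n]) (map g [0..<n]) = (\<Prod>i<n. inverse (of_nat (g i) powr f i))"
  by (simp add: chain_weight_def del: upt_Suc)

lemma prod_hook_diagram_weight: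
  "(\<Prod>x\<in>young_diagram (Suc p # replicate q 1). inverse (of_nat (M x) powr s x)) =
     pair_weight (hook_column q s) (hook_arm p s) (hook_column q M, hook_arm p M)"
  unfolding prod_hook_diagram
  by (simp add: pair_weight_def hook_column_def hook_arm_def chain_weight_map_upt
      del: upt_Suc prod.lessThan_Suc)

lemma hook_column_arm_in_head_le_pairs:
  assumes M: "M \<in> SSYT (Suc p # replicate q 1)"
  shows "(hook_column q M, hook_arm p M) \<in> head_le_pairs (Suc q) p"
proof -
  let ?D = "young_diagram (Suc p # replicate q 1)"
  have pos: "M x \<noteq> 0" if "x \<in> ?D" for x
    using M that by (fastforce simp: SSYT_def)
  have row: "M (1, j) \<le> M (1, Suc j)" if "1 \<le> j" "j \<le> p" for j
  proof -
    have "(1, j) \<in> ?D" "(1, Suc j) \<in> ?D" using that unfolding hook_diagram_iff by auto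
    with M show ?thesis unfolding SSYT_def by blast
  qed
  have column: "M (i, 1) < M (Suc i, 1)" if "1 \<le> i" "i \<le> q" for i
  proof -
    have "(i, 1) \<in> ?D" "(Suc i, 1) \<in> ?D" using that unfolding hook_diagram_iff by auto
    with M show ?thesis unfolding SSYT_def by blast
  qed
  have "sorted_wrt (<) (hook_column q M)"
    using column by (auto simp: hook_column_def sorted_wrt_iff_nth_Suc_transp simp del: upt_Suc)
  moreover have "sorted (hook_arm p M)"
    using row by (auto simp: hook_arm_def sorted_iff_nth_Suc)
  moreover have "M (Suc i, 1) \<noteq> 0" if "i < Suc q" for i
    using pos[of "(Suc i, 1)"] that unfolding hook_diagram_iff by auto
  then have "0 \<notin> set (hook_column q M)"
    by (auto simp: hook_column_def simp del: upt_Suc) (metis less_irrefl)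
  moreover have "M (1, k + 2) \<noteq> 0" if "k < p" for k
    using pos[of "(1, k + 2)"] that unfolding hook_diagram_iff by auto
  then have "0 \<notin> set (hook_arm p M)"
    by (auto simp: hook_arm_def) (metis less_irrefl)
  moreover have "hook_arm p M = [] \<or> hd (hook_column q M) \<le> hd (hook_arm p M)"
    using row[of 1] by (cases p) (auto simp: hook_column_def hook_arm_def hd_map upt_conv_Cons
        numeral_2_eq_2 simp del: upt_Suc)
  ultimately show ?thesis
    by (simp add: head_le_pairs_def strict_chains_def weak_chains_def hook_column_def hook_arm_def
        del: upt_Suc)
qed

lemma hook_tableau_in_SSYT:
  assumes "(u, v) \<in> head_le_pairs (Suc q) p"
  shows "hook_tableau p q (u, v) \<in> SSYT (Suc p # replicate q 1)"
proof -
  have u: "length u = Suc q" "sorted_wrt (<) u" "0 \<notin> set u"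
    and v: "length v = p" "sorted v" "0 \<notin> set v"
    and hd: "v = [] \<or> hd u \<le> hd v"
    using assms by (auto simp: head_le_pairs_def strict_chains_def weak_chains_def)
  let ?M = "hook_tableau p q (u, v)"
  have "1 \<le> ?M (a, b)" if "(a, b) \<in> young_diagram (Suc p # replicate q 1)" for a b
  proof -
    have "u ! (a - 1) \<in> set u" if "1 \<le> a" "a \<le> Suc q" using that u by auto
    moreover have "v ! (b - 2) \<in> set v" if "2 \<le> b" "b \<le> Suc p" using that v by auto
    ultimately show ?thesis
      using that u(3) v(3) unfolding hook_diagram_iff hook_tableau_def
      by (auto simp: Suc_le_eq intro!: Nat.gr0I)
  qed
  moreover have "?M (1, j) \<le> ?M (1, Suc j)" if "1 \<le> j" "j \<le> p" for j
  proof (cases "j = 1")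
    case True
    with that hd u v have "u ! 0 \<le> v ! 0" by (cases u; cases v) auto
    with True that show ?thesis by (simp add: hook_tableau_def)
  next
    case False
    with that v have "v ! (j - 2) \<le> v ! (Suc j - 2)" by (intro sorted_nth_mono) auto
    with False that show ?thesis by (simp add: hook_tableau_def)
  qed
  moreover have "?M (i, 1) < ?M (Suc i, 1)" if "1 \<le> i" "i \<le> q" for i
    using sorted_wrt_nth_less[OF u(2), of "i - 1" i] that u(1) by (simp add: hook_tableau_def)
  moreover have "?M (a, b) = 0" if "(a, b) \<notin> young_diagram (Suc p # replicate q 1)" for a b
    using that unfolding hook_diagram_iff hook_tableau_def by auto
  ultimately show ?thesis
    unfolding SSYT_def mem_Collect_eq Ball_def split_paired_All hook_diagram_iff
    by (intro conjI allI impI) (auto simp del: One_nat_def)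
qed

lemma hook_tableau_column_arm:
  assumes M: "M \<in> SSYT (Suc p # replicate q 1)"
  shows "hook_tableau p q (hook_column q M, hook_arm p M) = M"
proof (rule ext, clarify)
  fix a b
  have "M (a, b) = 0" if "(a, b) \<notin> young_diagram (Suc p # replicate q 1)"
    using M that by (auto simp: SSYT_def)
  moreover have "Suc (Suc (b - 2)) = b" if "2 \<le> b" using that by arith
  ultimately show "hook_tableau p q (hook_column q M, hook_arm p M) (a, b) = M (a, b)"
    unfolding hook_diagram_iff
    by (auto simp: hook_tableau_def hook_column_def hook_arm_def nth_append simp del: upt_Suc)
qed

lemma hook_column_arm_tableau:
  assumes "(u, v) \<in> head_le_pairs (Suc q) p"
  shows "hook_column q (hook_tableau p q (u, v)) = u"
    and "hook_arm p (hook_tableau p q (u, v)) = v"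
  using assms
  by (auto simp: hook_column_def hook_arm_def hook_tableau_def head_le_pairs_def strict_chains_def
      weak_chains_def intro!: nth_equalityI simp del: upt_Suc)

lemma schur_zeta_hook:
  "schur_zeta (Suc p # replicate q 1) s = hook_zeta (hook_column q s) (hook_arm p s)"
  unfolding schur_zeta_def hook_zeta_def
proof (rule infsum_reindex_bij_witness[where j = "\<lambda>M. (hook_column q M, hook_arm p M)"
      and i = "hook_tableau p q"])
  fix M assume M: "M \<in> SSYT (Suc p # replicate q 1)"
  then show "hook_tableau p q (hook_column q M, hook_arm p M) = M"
    by (rule hook_tableau_column_arm)
  show "(hook_column q M, hook_arm p M)
      \<in> head_le_pairs (length (hook_column q s)) (length (hook_arm p s))"
    using hook_column_arm_in_head_le_pairs[OF M] by simp
  show "pair_weight (hook_column q s) (hook_arm p s) (hook_column q M, hook_arm p M) =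
      (\<Prod>x\<in>young_diagram (Suc p # replicate q 1). inverse (of_nat (M x) powr s x))"
    by (rule prod_hook_diagram_weight[symmetric])
next
  fix uv assume uv: "uv \<in> head_le_pairs (length (hook_column q s)) (length (hook_arm p s))"
  obtain u v where "uv = (u, v)" by fastforce
  moreover have "uv \<in> head_le_pairs (Suc q) p"
    using uv by simp
  ultimately show "(hook_column q (hook_tableau p q uv), hook_arm p (hook_tableau p q uv)) = uv"
    and "hook_tableau p q uv \<in> SSYT (Suc p # replicate q 1)"
    using hook_column_arm_tableau hook_tableau_in_SSYT by blast+
qed

lemma sum_alternating_telescope:
  fixes h :: "nat \<Rightarrow> 'a::comm_ring_1"
  shows "(\<Sum>j=0..n. (-1) ^ j * (h j + h (Suc j))) = h 0 + (-1) ^ n * h (Suc n)"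
  by (induction n) (auto simp: algebra_simps)

lemma abs_summable_column_variables:
  assumes hz: "\<And>k. - int q \<le> k \<Longrightarrow> k \<le> int p \<Longrightarrow> Re (z k) \<ge> 1"
    and hq: "Re (z (- int q)) > 1" and "j \<le> p"
  shows "(\<lambda>m. norm (chain_weight (map z (rev [- int q..int j])) m))
           summable_on strict_chains (length (map z (rev [- int q..int j])))"
proof -
  have "hd [- int q..int j] = - int q" by (simp add: upto_rec1)
  then have "(\<lambda>m. norm (chain_weight (map z (rev [- int q..int j])) m))
      summable_on weak_chains (length (map z (rev [- int q..int j])))"
    using assms by (intro chain_weight_abs_summable) (auto simp: last_map last_rev)
  then show ?thesis
    by (rule summable_on_subset_banach) (rule strict_chains_subset_weak_chains)
qed

lemma abs_summable_row_variables:
  assumes hz: "\<And>k. - int q \<le> k \<Longrightarrow> k \<le> int p \<Longrightarrow> Re (z k) \<ge> 1"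
    and hp: "Re (z (int p)) > 1" and "j < p"
  shows "(\<lambda>m. norm (chain_weight (map z [int j + 1..int p]) m))
           summable_on weak_chains (length (map z [int j + 1..int p]))"
proof -
  have "last [int j + 1..int p] = int p" using \<open>j < p\<close> by (simp add: upto_rec2)
  then show ?thesis
    using assms by (intro chain_weight_abs_summable) (auto simp: last_map)
qed

lemma mzeta_times_mzeta_star_hook:
  assumes hz: "\<And>k. - int q \<le> k \<Longrightarrow> k \<le> int p \<Longrightarrow> Re (z k) \<ge> 1"
    and hp: "Re (z (int p)) > 1" and hq: "Re (z (- int q)) > 1" and "j \<le> p"
  shows "mzeta (map z (rev [- int q..int j])) * mzeta_star (map z [int j + 1..int p]) =
    hook_zeta (map z (rev [- int q..int j])) (map z [int j + 1..int p]) +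
    (if j < p then hook_zeta (map z (rev [- int q..int (Suc j)])) (map z [int (Suc j) + 1..int p])
     else 0)"
proof (cases "j < p")
  case True
  have "map z [int j + 1..int p] = z (int j + 1) # map z [int (Suc j) + 1..int p]"
    using True by (simp add: upto_rec1)
  moreover have "[- int q..int (Suc j)] = [- int q..int j] @ [int j + 1]"
    using upto_rec2[of "- int q" "int j + 1"] by (simp add: add.commute)
  ultimately show ?thesis
    using True mzeta_times_mzeta_star_Cons
      abs_summable_column_variables[of q p z, OF hz hq \<open>j \<le> p\<close>]
      abs_summable_row_variables[of q p z, OF hz hp True]
    by simp
next
  case False
  then show ?thesis
    using mzeta_times_mzeta_star_Nil abs_summable_column_variables[of q p z, OF hz hq \<open>j \<le> p\<close>]
    by simp
qed

theorem theorem3p1: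
  fixes p q :: nat and z :: "int \<Rightarrow> complex" and s :: "nat \<times> nat \<Rightarrow> complex"
  assumes hz: "\<And>k. - int q \<le> k \<Longrightarrow> k \<le> int p \<Longrightarrow> Re (z k) \<ge> 1"
    and hp: "Re (z (int p)) > 1"
    and hq: "Re (z (- int q)) > 1"
    and hrow: "\<And>j. 1 \<le> j \<Longrightarrow> j \<le> p + 1 \<Longrightarrow> s (1, j) = z (int j - 1)"
    and hcol: "\<And>i. 1 \<le> i \<Longrightarrow> i \<le> q + 1 \<Longrightarrow> s (i, 1) = z (- (int i - 1))"
  shows "schur_zeta ((p + 1) # replicate q 1) s =
    (\<Sum>j=0..p. (-1) ^ j * mzeta (map z (rev [- int q..int j]))
                        * mzeta_star (map z [int j + 1..int p]))"
proof -
  define h where "h j = (if j \<le> p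
      then hook_zeta (map z (rev [- int q..int j])) (map z [int j + 1..int p]) else 0)" for j
  have "hook_column q s = map z (rev [- int q..0])"
    using hcol by (intro nth_equalityI) (auto simp: hook_column_def rev_nth simp del: upt_Suc)
  moreover have "hook_arm p s = map z [1..int p]"
    using hrow by (intro nth_equalityI) (auto simp: hook_arm_def algebra_simps)
  ultimately have "schur_zeta ((p + 1) # replicate q 1) s = h 0"
    using schur_zeta_hook[of p q s] by (simp add: h_def)
  also have "\<dots> = (\<Sum>j=0..p. (-1) ^ j * (h j + h (Suc j)))"
    unfolding sum_alternating_telescope by (simp add: h_def)
  also have "\<dots> = (\<Sum>j=0..p. (-1) ^ j * mzeta (map z (rev [- int q..int j]))
                        * mzeta_star (map z [int j + 1..int p]))"
    using mzeta_times_mzeta_star_hook[OF hz hp hq]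
    by (intro sum.cong) (auto simp: h_def mult.assoc)
  finally show ?thesis .
qed

end
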